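(* Let $\mathcal{G}$ be a simple temporal clique and let $\mathcal{T}^-=(V,E^-_T)$ be obtained by the forward construction. Every vertex $v$ that is not an emitter can reach a vertex $v'$ lying in the same in-tree of $\mathcal{T}^-$ as $v$ (emitter or not) by a journey of length at most two whose last edge is $e^-(v')$.
   Context: A simple temporal clique is a pair $\mathcal{G}=(G,\lambda)$ where $G=(V,E)$ is the complete graph on a finite vertex set $V$ and $\lambda:E\to\mathbb{N}$ assigns to each edge a single integer label such that any two distinct edges sharing an endpoint have different labels; the label of an arc $(x,y)$ is $\lambda(\{x,y\})$. A journey from $x$ to $y$ is a sequence of vertices $x=u_0,\dots,u_k=y$ ($k\ge1$) with $\lambda(\{u_{i-1},u_i\})<\lambda(\{u_i,u_{i+1}\})$ for $1\le i<k$; its length is $k$ and its last edge is $\{u_{k-1},u_k\}$. For a vertex $v$, $e^-(v)$ is the edge incident to $v$ with smallest label. Forward construction: let $E^-$ be the set of arcs $(u,v)$ with $\{u,v\}=e^-(v)$, except that if $e^-(u)=e^-(v)=\{u,v\}$ only one of the two arcs $(u,v),(v,u)$ is included (arbitrarily). Initialize $E^-_T:=E^-$. For every vertex $v$ of out-degree at least $2$ in $(V,E^-)$, let $(v,u_1),\dots,(v,u_\ell)$ be its out-arcs in $E^-$, where $(v,u_\ell)$ has the largest label; for each $i<\ell$, if $u_i$ has out-degree $0$ in $(V,E^-)$, replace $(v,u_i)$ by $(u_i,v)$ in $E^-_T$, and otherwise remove $(v,u_i)$ from $E^-_T$. Set $\mathcal{T}^-=(V,E^-_T)$. Its weakly connected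 components are called in-trees; an emitter is a vertex of out-degree $0$ in $\mathcal{T}^-$. *)

theory Defs
  imports Main
begin

definition simple_temporal_clique :: "'v set \<Rightarrow> ('v set \<Rightarrow> nat) \<Rightarrow> bool" where
  "simple_temporal_clique V lam \<longleftrightarrow> finite V \<and>
     (\<forall>x\<in>V. \<forall>y\<in>V. \<forall>z\<in>V. x \<noteq> y \<longrightarrow> x \<noteq> z \<longrightarrow> y \<noteq> z \<longrightarrow> lam {x,y} \<noteq> lam {x,z})"

text \<open>emin V lam v u  means  e^-(v) = {v,u}.\<close>
definition emin :: "'v set \<Rightarrow> ('v set \<Rightarrow> nat) \<Rightarrow> 'v \<Rightarrow> 'v \<Rightarrow> bool" where
  "emin V lam v u \<longleftrightarrow> v \<in> V \<and> u \<in> V \<and> u \<noteq> v \<and>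
     (\<forall>w\<in>V. w \<noteq> v \<longrightarrow> w \<noteq> u \<longrightarrow> lam {v,u} < lam {v,w})"

text \<open>Em is an admissible choice of E^-: all arcs (u,v) with e^-(v) = {u,v}, where for
  mutual minimal edges exactly one of the two arcs is kept (arbitrary choice).\<close>
definition valid_Eminus :: "'v set \<Rightarrow> ('v set \<Rightarrow> nat) \<Rightarrow> ('v \<times> 'v) set \<Rightarrow> bool" where
  "valid_Eminus V lam Em \<longleftrightarrow>
     (\<forall>u v. (u,v) \<in> Em \<longrightarrow> emin V lam v u) \<and>
     (\<forall>u v. emin V lam v u \<longrightarrow> \<not> emin V lam u v \<longrightarrow> (u,v) \<in> Em) \<and>
     (\<forall>u v. emin V lam v u \<longrightarrow> emin V lam u v \<longrightarrow> ((u,v) \<in> Em \<longleftrightarrow> (v,u) \<notin> Em))"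

text \<open>Arcs (v,u) of Em that are not the largest-label out-arc of v (these are exactly the arcs
  (v,u_i), i < l, of vertices v of out-degree at least 2).\<close>
definition nonmax_arcs :: "('v set \<Rightarrow> nat) \<Rightarrow> ('v \<times> 'v) set \<Rightarrow> ('v \<times> 'v) set" where
  "nonmax_arcs lam Em = {(v,u). (v,u) \<in> Em \<and> (\<exists>w. (v,w) \<in> Em \<and> lam {v,u} < lam {v,w})}"

definition forward_ET :: "('v set \<Rightarrow> nat) \<Rightarrow> ('v \<times> 'v) set \<Rightarrow> ('v \<times> 'v) set" where
  "forward_ET lam Em = (Em - nonmax_arcs lam Em) \<union>
     {(u,v). (v,u) \<in> nonmax_arcs lam Em \<and> (\<forall>x. (u,x) \<notin> Em)}"

definition emitter :: "'v set \<Rightarrow> ('v \<times> 'v) set \<Rightarrow> 'v \<Rightarrow> bool" where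
  "emitter V ET v \<longleftrightarrow> v \<in> V \<and> (\<forall>x. (v,x) \<notin> ET)"

text \<open>Same in-tree = same weakly connected component of (V, ET).\<close>
definition same_in_tree :: "'v set \<Rightarrow> ('v \<times> 'v) set \<Rightarrow> 'v \<Rightarrow> 'v \<Rightarrow> bool" where
  "same_in_tree V ET x y \<longleftrightarrow> x \<in> V \<and> y \<in> V \<and> (x,y) \<in> (ET \<union> ET\<inverse>)\<^sup>*"

text \<open>A journey given as its vertex sequence u_0,...,u_k (k \<ge> 1); its length is k = length p - 1.\<close>
definition journey :: "'v set \<Rightarrow> ('v set \<Rightarrow> nat) \<Rightarrow> 'v list \<Rightarrow> bool" where
  "journey V lam p \<longleftrightarrow> length p \<ge> 2 \<and> set p \<subseteq> V \<and>
     (\<forall>i. Suc i < length p \<longrightarrow> p ! i \<noteq> p ! Suc i) \<and>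
     (\<forall>i. i + 2 < length p \<longrightarrow> lam {p ! i, p ! (i+1)} < lam {p ! (i+1), p ! (i+2)})"

end

theory Submission
  imports Defs
begin

text \<open>An arc (v,x) of the forward construction is either an arc of E^- that was kept, so that
  e^-(x) = {v,x} and the single edge is the journey, or the reversal of a non-maximal out-arc
  (x,v) of x. In the latter case e^-(v) = {x,v}, and following it by the maximal-label out-arc
  (x,w) of x, which is kept in E^-_T and has e^-(w) = {x,w}, gives the journey v, x, w. Both
  journeys stay inside the in-tree of v because they follow arcs of E^-_T.\<close>

lemma valid_Eminus_arc_emin:
  assumes "valid_Eminus V lam Em" and "(u, v) \<in> Em"
  shows "emin V lam v u"
  using assms unfolding valid_Eminus_def by blast

lemma valid_Eminus_subset:
  assumes "valid_Eminus V lam Em"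
  shows "Em \<subseteq> V \<times> V"
  using valid_Eminus_arc_emin[OF assms] unfolding emin_def by auto

lemma finite_Image_subset:
  assumes "finite V" and "R \<subseteq> V \<times> V"
  shows "finite (R `` {x})"
proof (rule finite_subset)
  show "R `` {x} \<subseteq> V" using assms(2) by blast
qed (fact assms(1))

lemma kept_arcs_subset_forward_ET: "Em - nonmax_arcs lam Em \<subseteq> forward_ET lam Em"
  unfolding forward_ET_def by blast

lemma forward_ET_arc_cases:
  assumes "(v, x) \<in> forward_ET lam Em"
  obtains "(v, x) \<in> Em - nonmax_arcs lam Em" | "(x, v) \<in> nonmax_arcs lam Em"
  using assms unfolding forward_ET_def by blast

lemma nonmax_arc_below_kept_arc:
  assumes "finite (Em `` {x})" and "(x, v) \<in> nonmax_arcs lam Em"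
  obtains w where "(x, w) \<in> Em - nonmax_arcs lam Em" and "lam {x, v} < lam {x, w}"
proof -
  let ?labels = "(\<lambda>w. lam {x, w}) ` (Em `` {x})"
  have "(x, v) \<in> Em" and above_v: "\<exists>u. (x, u) \<in> Em \<and> lam {x, v} < lam {x, u}"
    using assms(2) unfolding nonmax_arcs_def by auto
  then have "Max ?labels \<in> ?labels"
    using assms(1) by (intro Max_in) auto
  then obtain w where xw: "(x, w) \<in> Em" and w_max: "lam {x, w} = Max ?labels"
    by auto
  have le_w: "lam {x, u} \<le> lam {x, w}" if "(x, u) \<in> Em" for u
    unfolding w_max using assms(1) that by (intro Max_ge) auto
  show ?thesis
  proof
    show "(x, w) \<in> Em - nonmax_arcs lam Em"
      using xw le_w unfolding nonmax_arcs_def by (auto simp: not_less)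
    show "lam {x, v} < lam {x, w}"
      using above_v le_w by (meson less_le_trans)
  qed
qed

lemma journey_single_edge_iff:
  "journey V lam [a, b] \<longleftrightarrow> a \<in> V \<and> b \<in> V \<and> a \<noteq> b"
  unfolding journey_def by (auto simp: less_Suc_eq)

lemma journey_two_edges_iff:
  "journey V lam [a, b, c] \<longleftrightarrow>
     a \<in> V \<and> b \<in> V \<and> c \<in> V \<and> a \<noteq> b \<and> b \<noteq> c \<and> lam {a, b} < lam {b, c}"
  unfolding journey_def by (auto simp: less_Suc_eq)

lemma reversed_arc_journey:
  assumes "finite V" and "valid_Eminus V lam Em" and "(x, v) \<in> nonmax_arcs lam Em"
  obtains w where "(x, w) \<in> forward_ET lam Em" and "journey V lam [v, x, w]"
    and "emin V lam w x"
proof -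
  have "finite (Em `` {x})"
    using assms(1) valid_Eminus_subset[OF assms(2)] by (rule finite_Image_subset)
  then obtain w where xw: "(x, w) \<in> Em - nonmax_arcs lam Em" and vw: "lam {x, v} < lam {x, w}"
    using nonmax_arc_below_kept_arc[OF _ assms(3)] by blast
  have "(x, v) \<in> Em" using assms(3) unfolding nonmax_arcs_def by blast
  then have evx: "emin V lam v x" by (rule valid_Eminus_arc_emin[OF assms(2)])
  have ewx: "emin V lam w x" using xw valid_Eminus_arc_emin[OF assms(2)] by blast
  show ?thesis
  proof
    show "(x, w) \<in> forward_ET lam Em" using xw kept_arcs_subset_forward_ET by blast
    show "journey V lam [v, x, w]"
      using evx ewx vw unfolding journey_two_edges_iff emin_def by (auto simp: insert_commute)
  qed (fact ewx)
qed

lemma same_in_tree_if_rtrancl: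
  assumes "x \<in> V" and "y \<in> V" and "(x, y) \<in> ET\<^sup>*"
  shows "same_in_tree V ET x y"
  using assms rtrancl_mono[of ET "ET \<union> ET\<inverse>"] unfolding same_in_tree_def by blast

theorem lemma4:
  fixes V :: "'v set" and lam :: "'v set \<Rightarrow> nat" and Em :: "('v \<times> 'v) set"
  assumes "simple_temporal_clique V lam"
    and "valid_Eminus V lam Em"
    and "v \<in> V"
    and "\<not> emitter V (forward_ET lam Em) v"
  shows "\<exists>v' p. same_in_tree V (forward_ET lam Em) v v' \<and>
           journey V lam p \<and> hd p = v \<and> last p = v' \<and> length p \<le> 3 \<and>
           emin V lam v' (p ! (length p - 2))"
proof -
  let ?ET = "forward_ET lam Em"
  obtain x where vx: "(v, x) \<in> ?ET"
    using assms(3,4) unfolding emitter_def by blast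
  then show ?thesis
  proof (cases rule: forward_ET_arc_cases)
    case 1
    then have exv: "emin V lam x v" using valid_Eminus_arc_emin[OF assms(2)] by blast
    then have "journey V lam [v, x]"
      unfolding journey_single_edge_iff emin_def by auto
    moreover have "same_in_tree V ?ET v x"
      using vx exv unfolding emin_def by (auto intro: same_in_tree_if_rtrancl)
    ultimately show ?thesis
      using exv by (intro exI[of _ x] exI[of _ "[v, x]"]) simp
  next
    case 2
    have "finite V" using assms(1) unfolding simple_temporal_clique_def by blast
    then obtain w where xw: "(x, w) \<in> ?ET" and "journey V lam [v, x, w]"
      and ewx: "emin V lam w x"
      using reversed_arc_journey[OF _ assms(2) 2] by blast
    moreover have "same_in_tree V ?ET v w"
      using vx xw assms(3) ewx unfolding emin_def
      by (meson converse_rtrancl_into_rtrancl r_into_rtrancl same_in_tree_if_rtrancl)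
    ultimately show ?thesis
      by (intro exI[of _ w] exI[of _ "[v, x, w]"]) simp
  qed
qed

end
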